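(* The set $\mathcal{M}^+(X)$ of fully-supported Borel probability measures on $X=A^{\mathbb{N}}$, where $A$ is a finite alphabet with at least two symbols, is non-separable with respect to the projective distance \[ \rho(\mu,\nu)=\sup_{n\in\mathbb{N}}\max_{\pmb{a}\in A^n}\frac{1}{n}\left|\log\frac{\mu[\pmb{a}]}{\nu[\pmb{a}]}\right|. \]
   Context: $X=A^{\mathbb{N}}$ carries the product topology and its Borel $\sigma$-algebra. For $\pmb{a}=a_1\cdots a_n\in A^n$, $[\pmb{a}]=\{\pmb{x}\in X:\ x_1\cdots x_n=\pmb{a}\}$. $\mathcal{M}^+(X)$ is the set of Borel probability measures $\mu$ on $X$ with $\mu[\pmb{a}]>0$ for all finite words $\pmb{a}$. *)

theory Defs
  imports "HOL-Probability.Probability"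
begin

text \<open>The alphabet A is a finite type 'a; X = A^N is nat => 'a with the product
  sigma-algebra of discrete factors (which is the Borel sigma-algebra of the
  product topology on A^N).\<close>

definition Xsp :: "(nat \<Rightarrow> 'a) measure" where
  "Xsp = (\<Pi>\<^sub>M i\<in>(UNIV::nat set). count_space (UNIV::'a set))"

text \<open>Cylinder set of a finite word w = a_1 ... a_n (coordinates indexed from 0).\<close>
definition cyl :: "'a list \<Rightarrow> (nat \<Rightarrow> 'a) set" where
  "cyl w = {x \<in> space Xsp. \<forall>i<length w. x i = w ! i}"

definition Mplus :: "(nat \<Rightarrow> 'a) measure set" where
  "Mplus = {M. prob_space M \<and> sets M = sets Xsp \<and> (\<forall>w. measure M (cyl w) > 0)}"

text \<open>Projective distance (extended-real valued, since it may be infinite).\<close>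
definition rho :: "(nat \<Rightarrow> 'a::finite) measure \<Rightarrow> (nat \<Rightarrow> 'a) measure \<Rightarrow> ereal" where
  "rho \<mu> \<nu> = (SUP n\<in>{1..}. Max ((\<lambda>w. ereal ((1 / real n) *
       \<bar>ln (measure \<mu> (cyl w) / measure \<nu> (cyl w))\<bar>)) ` {w. length w = n}))"

end

theory Submission
  imports Defs "HOL-Library.Discrete_Functions"
begin

text \<open>Split the coordinates into the dyadic blocks \<open>[2^j, 2^(j+1))\<close> and, for \<open>S \<subseteq> \<nat>\<close>, let
  \<open>\<mu>_S\<close> be the product measure drawing the coordinates of the blocks indexed by \<open>S\<close> from a fully
  supported law \<open>p\<close> and all others from a different fully supported law \<open>q\<close>. If \<open>j\<close> separates
  \<open>S\<close> from \<open>S'\<close>, the word of length \<open>2^(j+1)\<close> spelling at each coordinate a letter favoured by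
  \<open>\<mu>_S\<close> has \<open>log (\<mu>_S/\<mu>_S') \<ge> 2^j \<delta>\<close> for a fixed \<open>\<delta> > 0\<close>, so \<open>\<rho>(\<mu>_S, \<mu>_S') \<ge> \<delta>/2\<close>.
  Since \<open>\<rho>\<close> is symmetric and satisfies the triangle inequality, a countable set that is dense
  would have to contain distinct points within \<open>\<delta>/4\<close> of the uncountably many \<open>\<mu>_S\<close>.\<close>

lemma space_Xsp: "space Xsp = UNIV"
  by (auto simp: Xsp_def space_PiM)

lemma measure_PiM_pmf_cyl:
  fixes p :: "nat \<Rightarrow> 'a pmf"
  shows "measure (PiM UNIV (\<lambda>i. measure_pmf (p i))) (cyl w) = (\<Prod>i<length w. pmf (p i) (w ! i))"
proof -
  interpret product_prob_space "\<lambda>i. measure_pmf (p i)" UNIV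
    by (intro product_prob_spaceI) (simp add: prob_space_measure_pmf)
  have cyl_emb: "cyl w = prod_emb UNIV (\<lambda>i. measure_pmf (p i)) {..<length w}
      (PiE {..<length w} (\<lambda>i. {w ! i}))"
    by (auto simp: prod_emb_iff restrict_PiE_iff cyl_def space_Xsp)
  have "emeasure (PiM UNIV (\<lambda>i. measure_pmf (p i))) (cyl w)
      = (\<Prod>i<length w. emeasure (measure_pmf (p i)) {w ! i})"
    unfolding cyl_emb by (rule emeasure_PiM_emb) auto
  also have "\<dots> = ennreal (\<Prod>i<length w. pmf (p i) (w ! i))"
    by (simp add: emeasure_pmf_single prod_ennreal)
  finally show ?thesis
    by (simp add: measure_def prod_nonneg)
qed

lemma PiM_pmf_in_Mplus:
  fixes p :: "nat \<Rightarrow> 'a pmf"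
  assumes "\<And>i. set_pmf (p i) = UNIV"
  shows "PiM UNIV (\<lambda>i. measure_pmf (p i)) \<in> Mplus"
proof -
  interpret product_prob_space "\<lambda>i. measure_pmf (p i)" UNIV
    by (intro product_prob_spaceI) (simp add: prob_space_measure_pmf)
  have "prob_space (PiM UNIV (\<lambda>i. measure_pmf (p i)))"
    by unfold_locales
  moreover have "sets (PiM UNIV (\<lambda>i. measure_pmf (p i))) = sets Xsp"
    unfolding Xsp_def by (rule sets_PiM_cong) simp_all
  moreover have "measure (PiM UNIV (\<lambda>i. measure_pmf (p i))) (cyl w) > 0" for w
    unfolding measure_PiM_pmf_cyl using assms by (intro prod_pos) (simp add: pmf_positive)
  ultimately show ?thesis
    unfolding Mplus_def by blast
qed

lemma rho_ge:
  assumes "length w = n" "n \<ge> 1"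
  shows "ereal ((1 / real n) * \<bar>ln (measure \<mu> (cyl w) / measure \<nu> (cyl w))\<bar>) \<le> rho \<mu> \<nu>"
proof -
  have "finite {w::'a list. length w = n}"
    using finite_lists_length_eq[of "UNIV::'a set" n] by simp
  then have "ereal ((1 / real n) * \<bar>ln (measure \<mu> (cyl w) / measure \<nu> (cyl w))\<bar>)
     \<le> Max ((\<lambda>w. ereal ((1 / real n) *
       \<bar>ln (measure \<mu> (cyl w) / measure \<nu> (cyl w))\<bar>)) ` {w. length w = n})"
    using assms by (intro Max_ge) auto
  also have "\<dots> \<le> rho \<mu> \<nu>"
    unfolding rho_def using assms by (intro SUP_upper) auto
  finally show ?thesis .
qed

lemma rho_le:
  assumes "\<And>w. length w \<ge> 1 \<Longrightarrow>
    ereal ((1 / real (length w)) * \<bar>ln (measure \<mu> (cyl w) / measure \<nu> (cyl w))\<bar>) \<le> c"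
  shows "rho \<mu> \<nu> \<le> c"
proof -
  have "finite {w::'a list. length w = n}" for n
    using finite_lists_length_eq[of "UNIV::'a set" n] by simp
  moreover have "{w::'a list. length w = n} \<noteq> {}" for n
    by (metis (mono_tags) length_replicate mem_Collect_eq empty_iff)
  ultimately show ?thesis
    unfolding rho_def using assms by (intro SUP_least) (auto simp: Max_le_iff)
qed

lemma abs_ln_div_commute: "\<bar>ln (a / b)\<bar> = \<bar>ln (b / a :: real)\<bar>"
  by (auto simp: ln_div abs_minus_commute)

lemma abs_ln_div_triangle:
  fixes a b c :: real
  assumes "b \<noteq> 0"
  shows "\<bar>ln (a / c)\<bar> \<le> \<bar>ln (a / b)\<bar> + \<bar>ln (b / c)\<bar>"
  using assms by (simp add: ln_div) arith

lemma rho_commute: "rho \<mu> \<nu> = rho \<nu> \<mu>"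
  unfolding rho_def by (simp add: abs_ln_div_commute)

lemma rho_triangle:
  assumes "\<And>w. measure \<sigma> (cyl w) \<noteq> 0"
  shows "rho \<mu> \<nu> \<le> rho \<mu> \<sigma> + rho \<sigma> \<nu>"
proof (rule rho_le)
  fix w :: "'a list"
  assume "length w \<ge> 1"
  define t where "t \<mu> \<nu> = (1 / real (length w)) * \<bar>ln (measure \<mu> (cyl w) / measure \<nu> (cyl w))\<bar>"
    for \<mu> \<nu> :: "(nat \<Rightarrow> 'a) measure"
  have "t \<mu> \<nu> \<le> t \<mu> \<sigma> + t \<sigma> \<nu>"
    unfolding t_def distrib_left[symmetric]
    by (intro mult_left_mono abs_ln_div_triangle assms) simp
  then have "ereal (t \<mu> \<nu>) \<le> ereal (t \<mu> \<sigma>) + ereal (t \<sigma> \<nu>)"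
    by simp
  also have "\<dots> \<le> rho \<mu> \<sigma> + rho \<sigma> \<nu>"
    unfolding t_def using \<open>length w \<ge> 1\<close> by (intro add_mono rho_ge) auto
  finally show "ereal (t \<mu> \<nu>) \<le> rho \<mu> \<sigma> + rho \<sigma> \<nu>" .
qed

lemma uncountable_UNIV_nat_set: "uncountable (UNIV :: nat set set)"
  using Cantors_theorem[of "UNIV :: nat set"] unfolding uncountable_def by auto

lemma uncountable_dense_subset:
  fixes \<mu> :: "'i \<Rightarrow> (nat \<Rightarrow> 'a::finite) measure" and D :: "(nat \<Rightarrow> 'a) measure set"
  assumes "uncountable (UNIV :: 'i set)" and "\<And>i. \<mu> i \<in> Mplus"
    and "\<delta> > 0" and separated: "\<And>i j. i \<noteq> j \<Longrightarrow> ereal \<delta> \<le> rho (\<mu> i) (\<mu> j)"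
    and "D \<subseteq> Mplus" and dense: "\<And>\<mu> \<epsilon>. \<mu> \<in> Mplus \<Longrightarrow> \<epsilon> > 0 \<Longrightarrow> \<exists>\<nu>\<in>D. rho \<mu> \<nu> < ereal \<epsilon>"
  shows "uncountable D"
proof
  assume "countable D"
  have "\<forall>i. \<exists>\<nu>. \<nu> \<in> D \<and> rho (\<mu> i) \<nu> < ereal (\<delta> / 2)"
    using dense assms(2,3) by (simp add: Bex_def)
  then obtain \<nu> where "\<forall>i. \<nu> i \<in> D \<and> rho (\<mu> i) (\<nu> i) < ereal (\<delta> / 2)"
    by (rule choice[THEN exE])
  then have \<nu>: "\<And>i. \<nu> i \<in> D" "\<And>i. rho (\<mu> i) (\<nu> i) < ereal (\<delta> / 2)"
    by simp_all
  have "inj \<nu>"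
  proof (rule injI, rule ccontr)
    fix i j
    assume "\<nu> i = \<nu> j" "i \<noteq> j"
    have "measure (\<nu> i) (cyl w) \<noteq> 0" for w
      using \<nu>(1)[of i] \<open>D \<subseteq> Mplus\<close> unfolding Mplus_def
      by (metis (mono_tags, lifting) in_mono mem_Collect_eq order_less_irrefl)
    then have "rho (\<mu> i) (\<mu> j) \<le> rho (\<mu> i) (\<nu> i) + rho (\<nu> j) (\<mu> j)"
      unfolding \<open>\<nu> i = \<nu> j\<close> by (rule rho_triangle)
    also have "\<dots> = rho (\<mu> i) (\<nu> i) + rho (\<mu> j) (\<nu> j)"
      by (subst rho_commute) (rule refl)
    also have "\<dots> < ereal (\<delta> / 2) + ereal (\<delta> / 2)"
      by (rule ereal_add_strict_mono2[OF \<nu>(2) \<nu>(2)])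
    finally have "rho (\<mu> i) (\<mu> j) < ereal \<delta>"
      by simp
    with separated[OF \<open>i \<noteq> j\<close>] show False
      by simp
  qed
  with \<nu>(1) \<open>countable D\<close> have "countable (UNIV :: 'i set)"
    by (metis countable_image_inj_on countable_subset image_subsetI)
  with assms(1) show False ..
qed

lemma pmf_less_somewhere:
  fixes p q :: "'a::finite pmf"
  assumes "p \<noteq> q"
  obtains a where "pmf q a < pmf p a"
proof -
  have "\<not> (\<forall>a. pmf p a \<le> pmf q a)"
  proof
    assume le: "\<forall>a. pmf p a \<le> pmf q a"
    have "(\<Sum>a\<in>UNIV. pmf q a - pmf p a) = 0"
      by (simp add: sum_subtractf sum_pmf_eq_1)
    then have "pmf q a - pmf p a = 0" for a
      using le by (subst (asm) sum_nonneg_eq_0_iff) auto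
    then have "p = q"
      by (intro pmf_eqI) simp
    with assms show False ..
  qed
  then show thesis
    using that by (auto simp: not_le)
qed

lemma exists_distinct_full_support_pmfs:
  assumes "CARD('a) \<ge> 2"
  obtains p q :: "'a::finite pmf" where "set_pmf p = UNIV" "set_pmf q = UNIV" "p \<noteq> q"
proof -
  fix a :: 'a
  let ?p = "pmf_of_multiset (add_mset a (mset_set UNIV))"
  have "pmf ?p a \<noteq> pmf (pmf_of_set UNIV) a"
    using assms by (simp add: size_mset_set field_simps)
  then have "?p \<noteq> pmf_of_set UNIV"
    by metis
  then show thesis
    by (intro that) auto
qed

lemma ln_pmf_ratio_ge:
  assumes "set_pmf p = UNIV" "set_pmf q = UNIV"
  shows "(if x = y then 0 else min (ln (pmf p a / pmf q a)) (ln (pmf q b / pmf p b)))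
    \<le> ln (pmf (if x then p else q) (if x then a else b) / pmf (if y then p else q) (if x then a else b))"
  using assms by (cases x; cases y) (auto simp: pmf_positive[THEN less_imp_neq, symmetric])

text \<open>Coordinate \<open>i\<close> lies in the dyadic block \<open>floor_log i\<close>, which is \<open>[2^j, 2^(j+1))\<close> for
  \<open>j \<ge> 1\<close> (coordinate \<open>0\<close> joins block \<open>0\<close>).\<close>
definition block_measure :: "'a pmf \<Rightarrow> 'a pmf \<Rightarrow> nat set \<Rightarrow> (nat \<Rightarrow> 'a) measure" where
  "block_measure p q S = PiM UNIV (\<lambda>i. measure_pmf (if floor_log i \<in> S then p else q))"

lemma block_measure_in_Mplus:
  assumes "set_pmf p = UNIV" "set_pmf q = UNIV"
  shows "block_measure p q S \<in> Mplus"
  unfolding block_measure_def using assms by (intro PiM_pmf_in_Mplus) simp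

lemma rho_block_measure_ge:
  fixes a b :: "'a::finite"
  assumes p: "set_pmf p = UNIV" and q: "set_pmf q = UNIV"
    and j: "(j \<in> S) \<noteq> (j \<in> S')"
  defines "\<delta> \<equiv> min (ln (pmf p a / pmf q a)) (ln (pmf q b / pmf p b))"
  assumes \<delta>: "\<delta> \<ge> 0"
  shows "ereal (\<delta> / 2) \<le> rho (block_measure p q S) (block_measure p q S')"
proof -
  define P where "P T i = (if floor_log i \<in> T then p else q)" for T i
  define n :: nat where "n = 2 ^ Suc j"
  \<comment> \<open>\<open>w\<close> spells the letter favoured by \<open>block_measure p q S\<close> over \<open>block_measure p q S'\<close>
     at every coordinate; block \<open>j\<close> has \<open>2 ^ j\<close> of the \<open>n\<close> coordinates.\<close>
  define w where "w = map (\<lambda>i. if floor_log i \<in> S then a else b) [0..<n]"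
  define g where "g i = ln (pmf (P S i) (w ! i) / pmf (P S' i) (w ! i))" for i
  have g_ge: "(if (floor_log i \<in> S) = (floor_log i \<in> S') then 0 else \<delta>) \<le> g i" if "i < n" for i
    using ln_pmf_ratio_ge[OF p q] that unfolding g_def P_def w_def \<delta>_def by simp
  have g_nonneg: "0 \<le> g i" if "i < n" for i
    using g_ge[OF that] \<delta> by (simp split: if_splits)
  have block: "floor_log i = j" if "i \<in> {2 ^ j..<n}" for i
    using that unfolding n_def by (intro floor_log_eqI) auto
  have "2 ^ j * \<delta> = (\<Sum>i\<in>{2 ^ j..<n}. \<delta>)"
    unfolding n_def by simp
  also have "\<dots> \<le> (\<Sum>i\<in>{2 ^ j..<n}. g i)"
    using g_ge block j by (intro sum_mono) (metis atLeastLessThan_iff)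
  also have "\<dots> \<le> (\<Sum>i<n. g i)"
    using g_nonneg by (intro sum_mono2) auto
  also have "\<dots> = ln (measure (block_measure p q S) (cyl w) / measure (block_measure p q S') (cyl w))"
    unfolding g_def block_measure_def measure_PiM_pmf_cyl prod_dividef[symmetric]
    using p q by (subst ln_prod) (auto simp: w_def P_def pmf_positive[THEN less_imp_neq, symmetric])
  finally have "\<delta> / 2 \<le> (1 / real n) * \<bar>ln (measure (block_measure p q S) (cyl w)
      / measure (block_measure p q S') (cyl w))\<bar>"
    unfolding n_def by (simp add: field_simps)
  also have "ereal \<dots> \<le> rho (block_measure p q S) (block_measure p q S')"
    by (rule rho_ge) (simp_all add: w_def n_def)
  finally show ?thesis by simp
qed

lemma block_measures_separated:
  fixes p q :: "'a::finite pmf"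
  assumes p: "set_pmf p = UNIV" and q: "set_pmf q = UNIV" and "p \<noteq> q"
  obtains \<delta> where "\<delta> > 0"
    and "\<And>S S'. S \<noteq> S' \<Longrightarrow> ereal \<delta> \<le> rho (block_measure p q S) (block_measure p q S')"
proof -
  obtain a b where a: "pmf q a < pmf p a" and b: "pmf p b < pmf q b"
    using \<open>p \<noteq> q\<close> by (metis pmf_less_somewhere)
  define \<delta> where "\<delta> = min (ln (pmf p a / pmf q a)) (ln (pmf q b / pmf p b))"
  have "\<delta> > 0"
    unfolding \<delta>_def using a b p q by (simp add: pmf_positive)
  moreover have "ereal (\<delta> / 2) \<le> rho (block_measure p q S) (block_measure p q S')" if "S \<noteq> S'" for S S'
  proof -
    obtain j where "(j \<in> S) \<noteq> (j \<in> S')"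
      using \<open>S \<noteq> S'\<close> by blast
    from rho_block_measure_ge[OF p q this] \<open>\<delta> > 0\<close> show ?thesis
      unfolding \<delta>_def by simp
  qed
  ultimately show thesis
    by (intro that[of "\<delta> / 2"]) auto
qed

theorem theorem2p2:
  assumes "CARD('a::finite) \<ge> 2"
  shows "\<not> (\<exists>D \<subseteq> (Mplus :: (nat \<Rightarrow> 'a) measure set). countable D \<and>
            (\<forall>\<mu>\<in>Mplus. \<forall>\<epsilon>>0. \<exists>\<nu>\<in>D. rho \<mu> \<nu> < ereal \<epsilon>))"
proof
  assume "\<exists>D \<subseteq> (Mplus :: (nat \<Rightarrow> 'a) measure set). countable D \<and>
            (\<forall>\<mu>\<in>Mplus. \<forall>\<epsilon>>0. \<exists>\<nu>\<in>D. rho \<mu> \<nu> < ereal \<epsilon>)"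
  then obtain D :: "(nat \<Rightarrow> 'a) measure set"
    where D: "D \<subseteq> Mplus" "countable D" and dense: "\<forall>\<mu>\<in>Mplus. \<forall>\<epsilon>>0. \<exists>\<nu>\<in>D. rho \<mu> \<nu> < ereal \<epsilon>"
    by blast
  obtain p q :: "'a pmf" where p: "set_pmf p = UNIV" and q: "set_pmf q = UNIV" and "p \<noteq> q"
    using exists_distinct_full_support_pmfs[OF assms] .
  obtain \<delta> where "\<delta> > 0"
    and "\<And>S S'. S \<noteq> S' \<Longrightarrow> ereal \<delta> \<le> rho (block_measure p q S) (block_measure p q S')"
    using block_measures_separated[OF p q \<open>p \<noteq> q\<close>] by blast
  then have "uncountable D"
    using uncountable_UNIV_nat_set block_measure_in_Mplus[OF p q] D(1) dense
    by (intro uncountable_dense_subset[where \<mu> = "block_measure p q"]) auto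
  with D(2) show False
    by blast
qed

end
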